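(* Let $\nu_k$ be a sequence of measures on $\mathbb{C}$, each $C_0$-nice and AD-regular with constant $c_0>0$, converging weakly to a measure $\nu$. Let $z_0\notin\operatorname{supp}(\nu)$ and $z\notin\operatorname{supp}(\nu)$. Then for all sufficiently large $k$, $z_0,z\notin\operatorname{supp}(\nu_k)$, so that $\widetilde{\mathcal{C}}_{\nu_k}(1)(z)=\int[K(z-\xi)-K(z_0-\xi)]\,d\nu_k(\xi)$ is well defined, and $$\widetilde{\mathcal{C}}_{\nu_k}(1)(z)\to\widetilde{\mathcal{C}}_\nu(1)(z)=\int[K(z-\xi)-K(z_0-\xi)]\,d\nu(\xi)\quad(k\to\infty).$$
   Context: Measures are positive locally finite Borel measures on $\mathbb{C}$; weak convergence means $\int\varphi\,d\nu_k\to\int\varphi\,d\nu$ for every continuous compactly supported $\varphi$. $K(z)=1/z$. $\nu$ is $C_0$-nice if $\nu(B(w,r))\le C_0r$ for all open discs; AD-regular with constant $c_0$ if moreover $\nu(B(w,r))\ge c_0r$ for $w\in\operatorname{supp}\nu$, $r>0$. For a nice measure and $z,z_0$ off its support the integral defining $\widetilde{\mathcal{C}}(1)(z)$ converges absolutely. *)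

theory Defs
  imports "HOL-Analysis.Analysis"
begin

definition borel_measure_on_C :: "complex measure \<Rightarrow> bool" where
  "borel_measure_on_C \<nu> \<longleftrightarrow> sets \<nu> = sets borel \<and>
     (\<forall>S. compact S \<longrightarrow> emeasure \<nu> S < \<infinity>)"

definition msupp :: "complex measure \<Rightarrow> complex set" where
  "msupp \<nu> = {w. \<forall>r>0. emeasure \<nu> (ball w r) > 0}"

definition nice :: "real \<Rightarrow> complex measure \<Rightarrow> bool" where
  "nice C0 \<nu> \<longleftrightarrow> (\<forall>w r. r > 0 \<longrightarrow> emeasure \<nu> (ball w r) \<le> ennreal (C0 * r))"

definition AD_regular :: "real \<Rightarrow> real \<Rightarrow> complex measure \<Rightarrow> bool" where
  "AD_regular C0 c0 \<nu> \<longleftrightarrow> nice C0 \<nu> \<and>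
     (\<forall>w r. w \<in> msupp \<nu> \<longrightarrow> r > 0 \<longrightarrow> ennreal (c0 * r) \<le> emeasure \<nu> (ball w r))"

definition weak_conv :: "(nat \<Rightarrow> complex measure) \<Rightarrow> complex measure \<Rightarrow> bool" where
  "weak_conv \<nu>s \<nu> \<longleftrightarrow>
     (\<forall>\<phi> :: complex \<Rightarrow> real. continuous_on UNIV \<phi> \<longrightarrow>
        (\<exists>K. compact K \<and> (\<forall>x. x \<notin> K \<longrightarrow> \<phi> x = 0)) \<longrightarrow>
        (\<lambda>k. integral\<^sup>L (\<nu>s k) \<phi>) \<longlonglongrightarrow> integral\<^sup>L \<nu> \<phi>)"

definition K :: "complex \<Rightarrow> complex" where
  "K z = 1 / z"

definition Ctilde1 :: "complex measure \<Rightarrow> complex \<Rightarrow> complex \<Rightarrow> complex" where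
  "Ctilde1 \<nu> z0 z = (\<integral>\<xi>. (K (z - \<xi>) - K (z0 - \<xi>)) \<partial>\<nu>)"

end

theory Submission
  imports Defs
begin

text \<open>
Off the supports the integrand \<open>K (z - \<xi>) - K (z0 - \<xi>) = (z0 - z) / ((z - \<xi>) (z0 - \<xi>))\<close> is
bounded and decays like \<open>1 / |\<xi>|\<^sup>2\<close>, but it is neither continuous nor compactly supported, so
weak convergence does not apply to it directly. AD-regularity keeps the supports of the \<open>\<nu>s k\<close>
eventually away from \<open>z\<close> and \<open>z0\<close>: a support point of \<open>\<nu>s k\<close> close to \<open>z\<close> carries mass
at least \<open>c0 r\<close>, which a test function supported where \<open>\<nu>\<close> vanishes would detect in the limit.
So the kernel may be replaced by a continuous truncation agreeing with it on all relevant
supports. A \<open>C\<close>-nice measure gives the region \<open>|\<xi>| \<ge> R\<close> at most \<open>4 C / R\<close> of \<open>1 / |\<xi>|\<^sup>2\<close>-mass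
(dyadic decomposition), and weak limits of \<open>C\<close>-nice measures are \<open>C\<close>-nice. Hence cutting the
truncated kernel off outside a large disc costs an error uniform in \<open>k\<close> and in the limit, and
on the compactly supported remainder weak convergence applies.
\<close>

section \<open>Borel measures on the plane and their supports\<close>

lemma sets_borel_measure_on_C: "borel_measure_on_C \<mu> \<Longrightarrow> sets \<mu> = sets borel"
  by (simp add: borel_measure_on_C_def)

lemma borel_measurable_borel_measure_on_C:
  "borel_measure_on_C \<mu> \<Longrightarrow> f \<in> borel_measurable borel \<Longrightarrow> f \<in> borel_measurable \<mu>"
  using measurable_cong_sets[OF sets_borel_measure_on_C refl] by blast

lemma emeasure_bounded_finite:
  assumes "borel_measure_on_C \<mu>" and "bounded S"
  shows "emeasure \<mu> S < \<infinity>"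
proof -
  have "emeasure \<mu> S \<le> emeasure \<mu> (closure S)"
    using assms by (intro emeasure_mono) (auto simp: borel_measure_on_C_def closure_subset)
  also have "\<dots> < \<infinity>"
    using assms by (auto simp: borel_measure_on_C_def compact_closure)
  finally show ?thesis .
qed

lemma emeasure_ball_eq_measure:
  "borel_measure_on_C \<mu> \<Longrightarrow> emeasure \<mu> (ball w r) = ennreal (measure \<mu> (ball w r))"
  using emeasure_bounded_finite[of \<mu> "ball w r"] by (simp add: emeasure_eq_ennreal_measure)

lemma nice_mono: "nice C \<mu> \<Longrightarrow> C \<le> C' \<Longrightarrow> nice C' \<mu>"
  unfolding nice_def by (metis ennreal_leI less_imp_le mult_right_mono order_trans)

lemma nice_measure_ball_le:
  assumes "borel_measure_on_C \<mu>" "nice C \<mu>" "C \<ge> 0" "r > 0"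
  shows "measure \<mu> (ball w r) \<le> C * r"
  using assms by (auto simp: nice_def emeasure_ball_eq_measure)

lemma integrable_continuous_compact_support:
  fixes f :: "complex \<Rightarrow> 'b::{banach, second_countable_topology}"
  assumes "borel_measure_on_C \<mu>" and "continuous_on UNIV f" and "compact S"
    and "\<And>x. x \<notin> S \<Longrightarrow> f x = 0"
  shows "integrable \<mu> f"
proof -
  obtain B where B: "\<forall>x\<in>S. norm (f x) \<le> B"
    using compact_imp_bounded[OF compact_continuous_image[OF continuous_on_subset]] assms
    by (metis bounded_iff image_eqI subset_UNIV)
  show ?thesis
  proof (rule integrableI_bounded_set)
    show "AE x in \<mu>. x \<in> S \<longrightarrow> norm (f x) \<le> B" using B by auto
    show "S \<in> sets \<mu>"
      using assms by (simp add: sets_borel_measure_on_C borel_compact)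
    show "emeasure \<mu> S < \<infinity>"
      using emeasure_bounded_finite[OF assms(1) compact_imp_bounded[OF assms(3)]] .
    show "f \<in> borel_measurable \<mu>"
      using assms by (simp add: borel_measurable_borel_measure_on_C borel_measurable_continuous_onI)
    show "AE x in \<mu>. x \<notin> S \<longrightarrow> f x = 0" using assms by auto
  qed
qed

lemma emeasure_eq_0_if_disjoint_msupp:
  assumes "borel_measure_on_C \<mu>" and "S \<in> sets borel" and "S \<inter> msupp \<mu> = {}"
  shows "emeasure \<mu> S = 0"
proof -
  define \<B> where "\<B> = {ball w r | w r. emeasure \<mu> (ball w r) = 0}"
  obtain \<B>' where \<B>': "\<B>' \<subseteq> \<B>" "countable \<B>'" "\<Union>\<B>' = \<Union>\<B>"
    using Lindelof[of \<B>] by (auto simp: \<B>_def)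
  have "S \<subseteq> \<Union>\<B>"
  proof
    fix w assume "w \<in> S"
    then have "w \<notin> msupp \<mu>" using assms(3) by blast
    then obtain r where "r > 0" "emeasure \<mu> (ball w r) = 0"
      by (auto simp: msupp_def)
    then show "w \<in> \<Union>\<B>" by (auto simp: \<B>_def intro!: exI[of _ "ball w r"])
  qed
  moreover have "(\<Union>B\<in>\<B>'. B) \<in> null_sets \<mu>"
  proof (rule null_sets_UN')
    fix B assume "B \<in> \<B>'"
    then obtain w r where "B = ball w r" "emeasure \<mu> (ball w r) = 0"
      using \<B>'(1) by (auto simp: \<B>_def)
    then show "B \<in> null_sets \<mu>"
      using assms(1) by (simp add: null_sets_def sets_borel_measure_on_C)
  qed (fact \<B>'(2))
  ultimately have "S \<in> null_sets \<mu>"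
    using \<B>'(3) assms(1,2) by (metis null_sets_subset sets_borel_measure_on_C image_ident)
  then show ?thesis by (rule null_setsD1)
qed

lemma emeasure_ball_eq_0_mono:
  assumes "borel_measure_on_C \<mu>" and "emeasure \<mu> (ball z r) = 0" and "s \<le> r"
  shows "emeasure \<mu> (ball z s) = 0"
proof (rule emeasure_eq_0)
  show "ball z r \<in> sets \<mu>" using assms(1) by (simp add: sets_borel_measure_on_C)
  show "ball z s \<subseteq> ball z r" using \<open>s \<le> r\<close> by (rule subset_ball)
qed (fact assms(2))

lemma eventually_at_right_emeasure_ball_eq_0:
  assumes \<mu>: "borel_measure_on_C \<mu>" and "z \<notin> msupp \<mu>"
  shows "\<forall>\<^sub>F r in at_right 0. emeasure \<mu> (ball z r) = 0"
proof -
  obtain r where "r > 0" and null: "emeasure \<mu> (ball z r) = 0"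
    using assms(2) by (auto simp: msupp_def)
  moreover have "\<forall>s>0. s < r \<longrightarrow> emeasure \<mu> (ball z s) = 0"
    using emeasure_ball_eq_0_mono[OF \<mu> null] by simp
  ultimately show ?thesis
    unfolding eventually_at_right_field by blast
qed

section \<open>Weak limits\<close>

definition plateau :: "complex \<Rightarrow> real \<Rightarrow> real \<Rightarrow> complex \<Rightarrow> real" where
  "plateau w r s x = max 0 (min 1 ((s - dist x w) / (s - r)))"

lemma continuous_on_plateau: "r < s \<Longrightarrow> continuous_on UNIV (plateau w r s)"
  unfolding plateau_def by (intro continuous_intros) auto

lemma plateau_nonneg: "0 \<le> plateau w r s x"
  and plateau_le_one: "plateau w r s x \<le> 1"
  by (auto simp: plateau_def)

lemma plateau_eq_one: "r < s \<Longrightarrow> dist x w \<le> r \<Longrightarrow> plateau w r s x = 1"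
  by (simp add: plateau_def)

lemma plateau_eq_zero: "r < s \<Longrightarrow> s \<le> dist x w \<Longrightarrow> plateau w r s x = 0"
  by (simp add: plateau_def divide_nonpos_pos)

lemma integrable_plateau:
  "borel_measure_on_C \<mu> \<Longrightarrow> r < s \<Longrightarrow> integrable \<mu> (plateau w r s)"
  by (rule integrable_continuous_compact_support[OF _ continuous_on_plateau compact_cball[of w s]])
    (auto simp: plateau_eq_zero dist_commute)

lemma measure_le_integral_plateau:
  assumes \<mu>: "borel_measure_on_C \<mu>" and "r < s" and A: "A \<in> sets borel" "A \<subseteq> cball w r"
  shows "measure \<mu> A \<le> integral\<^sup>L \<mu> (plateau w r s)"
proof -
  have fin: "emeasure \<mu> A < \<infinity>"
    using A by (intro emeasure_bounded_finite[OF \<mu>]) (auto intro: bounded_subset)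
  have "measure \<mu> A = integral\<^sup>L \<mu> (indicator A :: complex \<Rightarrow> real)"
    using A \<mu> by (simp add: sets_borel_measure_on_C)
  also have "\<dots> \<le> integral\<^sup>L \<mu> (plateau w r s)"
    using A \<mu> fin \<open>r < s\<close>
    by (intro integral_mono integrable_plateau)
      (auto simp: sets_borel_measure_on_C indicator_def plateau_nonneg plateau_eq_one dist_commute)
  finally show ?thesis .
qed

lemma integral_plateau_le_measure:
  assumes \<mu>: "borel_measure_on_C \<mu>" and "r < s"
  shows "integral\<^sup>L \<mu> (plateau w r s) \<le> measure \<mu> (ball w s)"
proof -
  have "integral\<^sup>L \<mu> (plateau w r s) \<le> integral\<^sup>L \<mu> (indicator (ball w s) :: complex \<Rightarrow> real)"
    using \<mu> emeasure_bounded_finite[OF \<mu>, of "ball w s"] \<open>r < s\<close>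
    by (intro integral_mono integrable_plateau)
      (auto simp: sets_borel_measure_on_C indicator_def plateau_le_one plateau_eq_zero dist_commute)
  also have "\<dots> = measure \<mu> (ball w s)"
    using \<mu> by (simp add: sets_borel_measure_on_C)
  finally show ?thesis .
qed

lemma weak_conv_tendsto:
  fixes \<phi> :: "complex \<Rightarrow> real"
  assumes "weak_conv \<mu>s \<mu>" and "continuous_on UNIV \<phi>" and "compact S" and "\<And>x. x \<notin> S \<Longrightarrow> \<phi> x = 0"
  shows "(\<lambda>k. integral\<^sup>L (\<mu>s k) \<phi>) \<longlonglongrightarrow> integral\<^sup>L \<mu> \<phi>"
  using assms unfolding weak_conv_def by blast

lemma weak_conv_tendsto_plateau:
  "weak_conv \<mu>s \<mu> \<Longrightarrow> r < s \<Longrightarrow>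
    (\<lambda>k. integral\<^sup>L (\<mu>s k) (plateau w r s)) \<longlonglongrightarrow> integral\<^sup>L \<mu> (plateau w r s)"
  by (rule weak_conv_tendsto[OF _ continuous_on_plateau compact_cball[of w s]])
    (auto simp: plateau_eq_zero dist_commute)

lemma weak_conv_tendsto_complex:
  fixes f :: "complex \<Rightarrow> complex"
  assumes \<mu>s: "\<And>k. borel_measure_on_C (\<mu>s k)" and \<mu>: "borel_measure_on_C \<mu>"
    and conv: "weak_conv \<mu>s \<mu>" and f: "continuous_on UNIV f" and S: "compact S"
    and supp: "\<And>x. x \<notin> S \<Longrightarrow> f x = 0"
  shows "(\<lambda>k. integral\<^sup>L (\<mu>s k) f) \<longlonglongrightarrow> integral\<^sup>L \<mu> f"
proof -
  have int: "integrable \<nu> f" if "borel_measure_on_C \<nu>" for \<nu>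
    by (rule integrable_continuous_compact_support[OF that f S supp])
  have "(\<lambda>k. integral\<^sup>L (\<mu>s k) (\<lambda>x. Re (f x))) \<longlonglongrightarrow> integral\<^sup>L \<mu> (\<lambda>x. Re (f x))"
    "(\<lambda>k. integral\<^sup>L (\<mu>s k) (\<lambda>x. Im (f x))) \<longlonglongrightarrow> integral\<^sup>L \<mu> (\<lambda>x. Im (f x))"
    using f supp by (auto intro!: weak_conv_tendsto[OF conv _ S] continuous_intros)
  then show ?thesis
    by (simp add: tendsto_complex_iff int[OF \<mu>s] int[OF \<mu>])
qed

lemma nice_weak_limit:
  assumes \<mu>s: "\<And>k. borel_measure_on_C (\<mu>s k)" and \<mu>: "borel_measure_on_C \<mu>"
    and nice: "\<And>k. nice C (\<mu>s k)" and "C \<ge> 0" and conv: "weak_conv \<mu>s \<mu>"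
  shows "nice C \<mu>"
  unfolding nice_def
proof (intro allI impI)
  fix w and r :: real assume "r > 0"
  have bound: "measure \<mu> (ball w r) \<le> C * (r + e)" if "e > 0" for e
  proof -
    have "measure \<mu> (ball w r) \<le> integral\<^sup>L \<mu> (plateau w r (r + e))"
      using \<open>e > 0\<close> by (intro measure_le_integral_plateau[OF \<mu>]) auto
    also have "\<dots> \<le> C * (r + e)"
    proof (rule LIMSEQ_le_const2[OF weak_conv_tendsto_plateau[OF conv]])
      show "\<exists>N. \<forall>k\<ge>N. integral\<^sup>L (\<mu>s k) (plateau w r (r + e)) \<le> C * (r + e)"
        using integral_plateau_le_measure[OF \<mu>s] nice_measure_ball_le[OF \<mu>s nice \<open>C \<ge> 0\<close>]
          \<open>r > 0\<close> \<open>e > 0\<close> by (meson add_pos_pos less_add_same_cancel1 order_trans)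
    qed (use \<open>e > 0\<close> in auto)
    finally show ?thesis .
  qed
  have "measure \<mu> (ball w r) \<le> C * r"
  proof (rule field_le_epsilon)
    fix \<epsilon> :: real assume "\<epsilon> > 0"
    have "C * (\<epsilon> / (C + 1)) \<le> \<epsilon>"
      using \<open>C \<ge> 0\<close> \<open>\<epsilon> > 0\<close> by (simp add: field_simps)
    then show "measure \<mu> (ball w r) \<le> C * r + \<epsilon>"
      using bound[of "\<epsilon> / (C + 1)"] \<open>C \<ge> 0\<close> \<open>\<epsilon> > 0\<close> by (simp add: distrib_left)
  qed
  then show "emeasure \<mu> (ball w r) \<le> ennreal (C * r)"
    by (simp add: emeasure_ball_eq_measure[OF \<mu>] ennreal_leI)
qed

lemma eventually_emeasure_ball_eq_0:
  assumes \<mu>s: "\<And>k. borel_measure_on_C (\<mu>s k)" and \<mu>: "borel_measure_on_C \<mu>"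
    and "c0 > 0" and reg: "\<And>k. AD_regular C c0 (\<mu>s k)" and conv: "weak_conv \<mu>s \<mu>"
    and "\<rho> > 0" and null: "emeasure \<mu> (ball w \<rho>) = 0"
  shows "\<forall>\<^sub>F k in sequentially. emeasure (\<mu>s k) (ball w (\<rho>/2)) = 0"
proof -
  let ?\<phi> = "plateau w (3/4 * \<rho>) \<rho>"
  have lim: "(\<lambda>k. integral\<^sup>L (\<mu>s k) ?\<phi>) \<longlonglongrightarrow> integral\<^sup>L \<mu> ?\<phi>"
    using \<open>\<rho> > 0\<close> by (intro weak_conv_tendsto_plateau[OF conv]) auto
  have "integral\<^sup>L \<mu> ?\<phi> \<le> measure \<mu> (ball w \<rho>)"
    using \<open>\<rho> > 0\<close> by (intro integral_plateau_le_measure[OF \<mu>]) auto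
  also have "\<dots> = 0"
    using null by (simp add: measure_def)
  also have "\<dots> < c0 * (\<rho>/4)"
    using \<open>c0 > 0\<close> \<open>\<rho> > 0\<close> by simp
  finally have "\<forall>\<^sub>F k in sequentially. integral\<^sup>L (\<mu>s k) ?\<phi> < c0 * (\<rho>/4)"
    by (rule order_tendstoD(2)[OF lim])
  then show ?thesis
  proof eventually_elim
    case (elim k)
    \<comment> \<open>a support point near \<open>w\<close> carries mass \<open>c0 \<rho>/4\<close> where the plateau equals 1\<close>
    have "v \<notin> msupp (\<mu>s k)" if v: "v \<in> ball w (\<rho>/2)" for v
    proof
      assume "v \<in> msupp (\<mu>s k)"
      then have "ennreal (c0 * (\<rho>/4)) \<le> emeasure (\<mu>s k) (ball v (\<rho>/4))"
        using reg[of k] \<open>\<rho> > 0\<close> unfolding AD_regular_def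
        by (metis divide_pos_pos zero_less_numeral)
      then have "c0 * (\<rho>/4) \<le> measure (\<mu>s k) (ball v (\<rho>/4))"
        by (simp add: emeasure_ball_eq_measure[OF \<mu>s] ennreal_le_iff)
      also have "\<dots> \<le> integral\<^sup>L (\<mu>s k) ?\<phi>"
      proof (rule measure_le_integral_plateau[OF \<mu>s])
        show "ball v (\<rho>/4) \<subseteq> cball w (3/4 * \<rho>)"
        proof
          fix y assume "y \<in> ball v (\<rho>/4)"
          then show "y \<in> cball w (3/4 * \<rho>)"
            using v dist_triangle[of w y v] by (simp add: dist_commute)
        qed
      qed (use \<open>\<rho> > 0\<close> in auto)
      finally show False using elim by simp
    qed
    then show ?case
      by (intro emeasure_eq_0_if_disjoint_msupp[OF \<mu>s]) auto
  qed
qed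

section \<open>Tails of nice measures\<close>

lemma real_dyadic_bracket:
  fixes t :: real assumes "1 \<le> t"
  obtains j :: nat where "2^j \<le> t" "t < 2^Suc j"
proof -
  define j where "j = nat \<lfloor>log 2 t\<rfloor>"
  have "0 \<le> log 2 t" using assms by simp
  then have "real j \<le> log 2 t" "log 2 t < real j + 1"
    by (simp_all add: j_def)
  then have "2 powr real j \<le> t" "t < 2 powr (real j + 1)"
    using assms by (simp_all add: le_log_iff log_less_iff)
  then show ?thesis
    by (intro that) (simp_all add: powr_realpow powr_add mult.commute)
qed

lemma inverse_square_tail_le_dyadic_sum:
  fixes x :: "'a::real_normed_vector"
  assumes "R > 0"
  shows "indicator {x. R \<le> norm x} x * ennreal (1 / (norm x)^2)
    \<le> (\<Sum>j. ennreal (1 / (2^j * R)^2) * indicator (ball 0 (2^Suc j * R)) x)"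
proof -
  define g where "g j = ennreal (1 / (2^j * R)^2) * indicator (ball 0 (2^Suc j * R)) x" for j :: nat
  have "indicator {x. R \<le> norm x} x * ennreal (1 / (norm x)^2) \<le> suminf g"
  proof (cases "R \<le> norm x")
    case True
    then have "1 \<le> norm x / R" using \<open>R > 0\<close> by simp
    then obtain j where j: "2^j \<le> norm x / R" "norm x / R < 2^Suc j"
      by (rule real_dyadic_bracket)
    then have "2^j * R \<le> norm x" "norm x < 2^Suc j * R"
      using \<open>R > 0\<close> by (simp_all add: field_simps)
    moreover have "0 < 2^j * R" using \<open>R > 0\<close> by simp
    ultimately have "1 / (norm x)^2 \<le> 1 / (2^j * R)^2" "x \<in> ball 0 (2^Suc j * R)"
      by (auto intro!: divide_left_mono power_mono mult_pos_pos simp del: power_Suc)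
    then have "indicator {x. R \<le> norm x} x * ennreal (1 / (norm x)^2) \<le> g j"
      using True by (simp add: g_def ennreal_leI)
    also have "g j \<le> suminf g"
      using sum_le_suminf[of g "{j}"] by simp
    finally show ?thesis .
  qed simp
  then show ?thesis by (simp only: g_def[abs_def])
qed

lemma nice_nn_integral_inverse_square_tail:
  assumes \<mu>: "borel_measure_on_C \<mu>" and nice: "nice C \<mu>" and "C \<ge> 0" and "R > 0"
  shows "(\<integral>\<^sup>+x. indicator {x. R \<le> norm x} x * ennreal (1 / (norm x)^2) \<partial>\<mu>) \<le> ennreal (4 * C / R)"
proof -
  have [measurable_cong]: "sets \<mu> = sets borel" by (rule sets_borel_measure_on_C[OF \<mu>])
  have "(\<integral>\<^sup>+x. indicator {x. R \<le> norm x} x * ennreal (1 / (norm x)^2) \<partial>\<mu>)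
      \<le> (\<integral>\<^sup>+x. (\<Sum>j. ennreal (1 / (2^j * R)^2) * indicator (ball 0 (2^Suc j * R)) x) \<partial>\<mu>)"
    using \<open>R > 0\<close> by (intro nn_integral_mono inverse_square_tail_le_dyadic_sum)
  also have "\<dots> = (\<Sum>j. ennreal (1 / (2^j * R)^2) * emeasure \<mu> (ball 0 (2^Suc j * R)))"
  proof -
    have "(\<lambda>x. ennreal (1 / (2^j * R)^2) * indicator (ball 0 (2^Suc j * R)) x) \<in> borel_measurable \<mu>"
      for j :: nat by measurable (simp add: pred_def)
    then show ?thesis
      using \<mu> by (simp add: nn_integral_suminf nn_integral_cmult_indicator sets_borel_measure_on_C)
  qed
  also have "\<dots> \<le> (\<Sum>j. ennreal (2 * C / R * (1/2)^j))"
  proof (intro suminf_le allI)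
    fix j :: nat
    have "ennreal (1 / (2^j * R)^2) * emeasure \<mu> (ball 0 (2^Suc j * R))
        \<le> ennreal (1 / (2^j * R)^2) * ennreal (C * (2^Suc j * R))"
      using nice \<open>R > 0\<close> unfolding nice_def by (intro mult_left_mono) auto
    also have "\<dots> = ennreal (2 * C / R * (1/2)^j)"
      using \<open>R > 0\<close> \<open>C \<ge> 0\<close>
      by (subst ennreal_mult'[symmetric]) (auto simp: field_simps power2_eq_square power_mult_distrib)
    finally show "ennreal (1 / (2^j * R)^2) * emeasure \<mu> (ball 0 (2^Suc j * R)) \<le> ennreal (2 * C / R * (1/2)^j)" .
  qed auto
  also have "\<dots> = ennreal (4 * C / R)"
  proof (rule suminf_ennreal_eq)
    show "0 \<le> 2 * C / R * (1/2)^j" for j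
      using \<open>C \<ge> 0\<close> \<open>R > 0\<close> by simp
    show "(\<lambda>j. 2 * C / R * (1/2::real)^j) sums (4 * C / R)"
      using sums_mult[OF geometric_sums[of "1/2::real"], of "2 * C / R"] by simp
  qed
  finally show ?thesis .
qed

lemma nice_nn_integral_tail_le:
  fixes F :: "complex \<Rightarrow> 'b::real_normed_vector"
  assumes \<mu>: "borel_measure_on_C \<mu>" and nice: "nice C \<mu>" and "C \<ge> 0"
    and decay: "\<And>x. R0 \<le> norm x \<Longrightarrow> norm (F x) \<le> A / (norm x)^2" and "A \<ge> 0"
    and "0 < R0" and "R0 \<le> R"
  shows "(\<integral>\<^sup>+x. ennreal (norm (F x) * indicator {x. R \<le> norm x} x) \<partial>\<mu>) \<le> ennreal (A * (4 * C / R))"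
proof -
  have [measurable_cong]: "sets \<mu> = sets borel" by (rule sets_borel_measure_on_C[OF \<mu>])
  have "(\<integral>\<^sup>+x. ennreal (norm (F x) * indicator {x. R \<le> norm x} x) \<partial>\<mu>)
      \<le> (\<integral>\<^sup>+x. ennreal A * (indicator {x. R \<le> norm x} x * ennreal (1 / (norm x)^2)) \<partial>\<mu>)"
  proof (intro nn_integral_mono)
    fix x
    show "ennreal (norm (F x) * indicator {x. R \<le> norm x} x)
        \<le> ennreal A * (indicator {x. R \<le> norm x} x * ennreal (1 / (norm x)^2))"
      using decay[of x] \<open>R0 \<le> R\<close> \<open>A \<ge> 0\<close>
      by (auto simp: indicator_def ennreal_mult'[symmetric] intro!: ennreal_leI)
  qed
  also have "\<dots> = ennreal A * (\<integral>\<^sup>+x. indicator {x. R \<le> norm x} x * ennreal (1 / (norm x)^2) \<partial>\<mu>)"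
    by (rule nn_integral_cmult) measurable
  also have "\<dots> \<le> ennreal A * ennreal (4 * C / R)"
    using \<open>0 < R0\<close> \<open>R0 \<le> R\<close>
    by (intro mult_left_mono nice_nn_integral_inverse_square_tail[OF \<mu> nice \<open>C \<ge> 0\<close>]) auto
  also have "\<dots> = ennreal (A * (4 * C / R))"
    using \<open>A \<ge> 0\<close> by (simp add: ennreal_mult'[symmetric])
  finally show ?thesis .
qed

lemma nice_integrable_of_decay:
  fixes F :: "complex \<Rightarrow> 'b::{banach, second_countable_topology}"
  assumes \<mu>: "borel_measure_on_C \<mu>" and nice: "nice C \<mu>" and "C \<ge> 0"
    and F: "F \<in> borel_measurable borel" and bound: "\<And>x. norm (F x) \<le> B"
    and decay: "\<And>x. R0 \<le> norm x \<Longrightarrow> norm (F x) \<le> A / (norm x)^2" and "A \<ge> 0" and "0 < R0"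
  shows "integrable \<mu> F"
proof (rule integrableI_bounded)
  have [measurable_cong]: "sets \<mu> = sets borel" by (rule sets_borel_measure_on_C[OF \<mu>])
  show "F \<in> borel_measurable \<mu>" using F by simp
  have ind: "(\<lambda>x. ennreal B * indicator (ball 0 R0) x) \<in> borel_measurable \<mu>"
    by measurable (simp add: pred_def)
  have "(\<integral>\<^sup>+x. norm (F x) \<partial>\<mu>)
      \<le> (\<integral>\<^sup>+x. ennreal B * indicator (ball 0 R0) x + ennreal (norm (F x) * indicator {x. R0 \<le> norm x} x) \<partial>\<mu>)"
    using bound by (intro nn_integral_mono) (auto simp: indicator_def intro: ennreal_leI)
  also have "\<dots> = ennreal B * emeasure \<mu> (ball 0 R0)
      + (\<integral>\<^sup>+x. ennreal (norm (F x) * indicator {x. R0 \<le> norm x} x) \<partial>\<mu>)"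
    using F \<mu> ind by (subst nn_integral_add) (auto simp: nn_integral_cmult_indicator sets_borel_measure_on_C)
  also have "\<dots> < \<infinity>"
    using emeasure_bounded_finite[OF \<mu>, of "ball 0 R0"] \<open>0 < R0\<close> \<open>A \<ge> 0\<close>
      nice_nn_integral_tail_le[OF \<mu> nice \<open>C \<ge> 0\<close> decay \<open>A \<ge> 0\<close> \<open>0 < R0\<close> order_refl]
    by (auto simp: ennreal_mult_less_top order_le_less_trans)
  finally show "(\<integral>\<^sup>+x. norm (F x) \<partial>\<mu>) < \<infinity>" .
qed

lemma norm_cutoff_diff_le:
  fixes v :: "'b::real_normed_vector"
  shows "norm (v - plateau 0 (real n) (real n + 1) x *\<^sub>R v)
    \<le> norm v * indicator {x. real n \<le> norm x} x"
proof (cases "real n \<le> norm x")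
  case True
  let ?p = "plateau 0 (real n) (real n + 1) x"
  have "v - ?p *\<^sub>R v = (1 - ?p) *\<^sub>R v"
    by (simp add: scaleR_diff_left)
  then have "norm (v - ?p *\<^sub>R v) = (1 - ?p) * norm v"
    using plateau_le_one[of 0 "real n" "real n + 1" x] by simp
  also have "\<dots> \<le> norm v"
    using plateau_nonneg[of 0 "real n" "real n + 1" x] plateau_le_one[of 0 "real n" "real n + 1" x]
    by (intro mult_left_le_one_le) auto
  finally show ?thesis using True by simp
qed (simp add: plateau_eq_one)

lemma nice_integral_cutoff_error:
  fixes F :: "complex \<Rightarrow> 'b::{banach, second_countable_topology}"
  assumes \<mu>: "borel_measure_on_C \<mu>" and nice: "nice C \<mu>" and "C \<ge> 0"
    and F: "F \<in> borel_measurable borel" and bound: "\<And>x. norm (F x) \<le> B"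
    and decay: "\<And>x. R0 \<le> norm x \<Longrightarrow> norm (F x) \<le> A / (norm x)^2" and "A \<ge> 0" and "0 < R0"
    and "R0 \<le> real n"
  shows "norm (integral\<^sup>L \<mu> F - integral\<^sup>L \<mu> (\<lambda>x. plateau 0 (real n) (real n + 1) x *\<^sub>R F x))
    \<le> A * (4 * C / n)"
proof -
  have [measurable_cong]: "sets \<mu> = sets borel" by (rule sets_borel_measure_on_C[OF \<mu>])
  let ?\<chi> = "plateau 0 (real n) (real n + 1)"
  have [measurable]: "?\<chi> \<in> borel_measurable borel"
    by (intro borel_measurable_continuous_onI continuous_on_plateau) simp
  have intF: "integrable \<mu> F"
    by (rule nice_integrable_of_decay[OF \<mu> nice \<open>C \<ge> 0\<close> F bound decay \<open>A \<ge> 0\<close> \<open>0 < R0\<close>])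
  have int\<chi>F: "integrable \<mu> (\<lambda>x. ?\<chi> x *\<^sub>R F x)"
  proof (rule Bochner_Integration.integrable_bound[OF intF])
    show "(\<lambda>x. ?\<chi> x *\<^sub>R F x) \<in> borel_measurable \<mu>" using F by measurable
    show "AE x in \<mu>. norm (?\<chi> x *\<^sub>R F x) \<le> norm (F x)"
      using plateau_nonneg plateau_le_one by (simp add: mult_left_le_one_le)
  qed
  have "norm (integral\<^sup>L \<mu> F - integral\<^sup>L \<mu> (\<lambda>x. ?\<chi> x *\<^sub>R F x))
      \<le> integral\<^sup>L \<mu> (\<lambda>x. norm (F x - ?\<chi> x *\<^sub>R F x))"
    using integral_norm_bound[of \<mu> "\<lambda>x. F x - ?\<chi> x *\<^sub>R F x"] intF int\<chi>F by simp
  also have "\<dots> \<le> A * (4 * C / n)"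
  proof -
    have "ennreal (integral\<^sup>L \<mu> (\<lambda>x. norm (F x - ?\<chi> x *\<^sub>R F x)))
        = (\<integral>\<^sup>+x. norm (F x - ?\<chi> x *\<^sub>R F x) \<partial>\<mu>)"
      using intF int\<chi>F by (intro nn_integral_eq_integral[symmetric]) auto
    also have "\<dots> \<le> (\<integral>\<^sup>+x. ennreal (norm (F x) * indicator {x. real n \<le> norm x} x) \<partial>\<mu>)"
      by (intro nn_integral_mono ennreal_leI norm_cutoff_diff_le)
    also have "\<dots> \<le> ennreal (A * (4 * C / n))"
      by (rule nice_nn_integral_tail_le[OF \<mu> nice \<open>C \<ge> 0\<close> decay \<open>A \<ge> 0\<close> \<open>0 < R0\<close> \<open>R0 \<le> real n\<close>])
    finally show ?thesis
      using \<open>A \<ge> 0\<close> \<open>C \<ge> 0\<close> by (simp add: ennreal_le_iff)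
  qed
  finally show ?thesis .
qed

lemma tendsto_of_uniform_approximation:
  fixes x :: "nat \<Rightarrow> 'a::metric_space"
  assumes approx_lim: "\<And>n. (\<lambda>k. a n k) \<longlonglongrightarrow> b n"
    and close: "\<forall>\<^sub>F n in sequentially. (\<forall>k. dist (x k) (a n k) \<le> e n) \<and> dist (b n) L \<le> e n"
    and "e \<longlonglongrightarrow> 0"
  shows "x \<longlonglongrightarrow> L"
proof (rule tendstoI)
  fix \<epsilon> :: real assume "\<epsilon> > 0"
  then have "\<forall>\<^sub>F n in sequentially. e n < \<epsilon> / 3"
    using \<open>e \<longlonglongrightarrow> 0\<close> by (intro order_tendstoD) auto
  with close have "\<forall>\<^sub>F n in sequentially. ((\<forall>k. dist (x k) (a n k) \<le> e n) \<and> dist (b n) L \<le> e n) \<and> e n < \<epsilon> / 3"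
    by (rule eventually_conj)
  then obtain n where "\<forall>k. dist (x k) (a n k) \<le> e n" "dist (b n) L \<le> e n" "e n < \<epsilon> / 3"
    unfolding eventually_sequentially by blast
  then have n: "\<forall>k. dist (x k) (a n k) < \<epsilon> / 3" "dist (b n) L < \<epsilon> / 3"
    by (meson le_less_trans)+
  have "\<forall>\<^sub>F k in sequentially. dist (a n k) (b n) < \<epsilon> / 3"
    using approx_lim \<open>\<epsilon> > 0\<close> by (intro tendstoD) auto
  then show "\<forall>\<^sub>F k in sequentially. dist (x k) L < \<epsilon>"
  proof eventually_elim
    case (elim k)
    show ?case
      using dist_triangle[of "x k" L "a n k"] dist_triangle[of "a n k" L "b n"]
        elim n(1)[rule_format, of k] n(2) by linarith
  qed
qed

lemma weak_conv_integral_tendsto_of_decay: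
  fixes F :: "complex \<Rightarrow> complex"
  assumes \<mu>s: "\<And>k. borel_measure_on_C (\<mu>s k)" and \<mu>: "borel_measure_on_C \<mu>"
    and nice: "\<And>k. nice C (\<mu>s k)" and "C \<ge> 0" and conv: "weak_conv \<mu>s \<mu>"
    and F: "continuous_on UNIV F" and bound: "\<And>x. norm (F x) \<le> B"
    and decay: "\<And>x. R0 \<le> norm x \<Longrightarrow> norm (F x) \<le> A / (norm x)^2" and "A \<ge> 0" and "0 < R0"
  shows "integrable \<mu> F" and "\<And>k. integrable (\<mu>s k) F"
    and "(\<lambda>k. integral\<^sup>L (\<mu>s k) F) \<longlonglongrightarrow> integral\<^sup>L \<mu> F"
proof -
  have nice_\<mu>: "nice C \<mu>"
    by (rule nice_weak_limit[OF \<mu>s \<mu> nice \<open>C \<ge> 0\<close> conv])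
  have Fm: "F \<in> borel_measurable borel"
    by (rule borel_measurable_continuous_onI[OF F])
  note integrable = nice_integrable_of_decay[OF _ _ \<open>C \<ge> 0\<close> Fm bound decay \<open>A \<ge> 0\<close> \<open>0 < R0\<close>]
  note cutoff = nice_integral_cutoff_error[OF _ _ \<open>C \<ge> 0\<close> Fm bound decay \<open>A \<ge> 0\<close> \<open>0 < R0\<close>]
  show "integrable \<mu> F" by (rule integrable[OF \<mu> nice_\<mu>])
  show "integrable (\<mu>s k) F" for k by (rule integrable[OF \<mu>s nice])
  let ?\<chi> = "\<lambda>n. plateau 0 (real n) (real n + 1)"
  \<comment> \<open>since \<open>\<mu>\<close> is nice as well, the cutoff error is bounded uniformly in \<open>k\<close> and for the limit\<close>
  show "(\<lambda>k. integral\<^sup>L (\<mu>s k) F) \<longlonglongrightarrow> integral\<^sup>L \<mu> F"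
  proof (rule tendsto_of_uniform_approximation)
    show "(\<lambda>k. integral\<^sup>L (\<mu>s k) (\<lambda>x. ?\<chi> n x *\<^sub>R F x)) \<longlonglongrightarrow> integral\<^sup>L \<mu> (\<lambda>x. ?\<chi> n x *\<^sub>R F x)"
      for n
      by (rule weak_conv_tendsto_complex[OF \<mu>s \<mu> conv _ compact_cball[of 0 "real n + 1"]])
        (auto intro!: continuous_intros continuous_on_plateau F simp: plateau_eq_zero dist_commute)
    show "\<forall>\<^sub>F n in sequentially.
        (\<forall>k. dist (integral\<^sup>L (\<mu>s k) F) (integral\<^sup>L (\<mu>s k) (\<lambda>x. ?\<chi> n x *\<^sub>R F x))
          \<le> A * (4 * C / n))
        \<and> dist (integral\<^sup>L \<mu> (\<lambda>x. ?\<chi> n x *\<^sub>R F x)) (integral\<^sup>L \<mu> F) \<le> A * (4 * C / n)"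
      using eventually_ge_at_top[of "nat \<lceil>R0\<rceil>"]
    proof eventually_elim
      case (elim n)
      then have "R0 \<le> real n" by linarith
      then show ?case
        using cutoff[OF \<mu>s nice] cutoff[OF \<mu> nice_\<mu>] by (simp add: dist_norm norm_minus_commute)
    qed
    show "(\<lambda>n. A * (4 * C / real n)) \<longlonglongrightarrow> 0"
      using tendsto_mult_right_zero[OF lim_inverse_n, of "A * 4 * C"] by (simp add: divide_inverse mult.assoc)
  qed
qed

section \<open>The truncated Cauchy kernel\<close>

definition K_trunc :: "real \<Rightarrow> complex \<Rightarrow> complex" where
  "K_trunc \<delta> w = cnj w / complex_of_real ((max (norm w) \<delta>)^2)"

lemma continuous_on_K_trunc: "\<delta> > 0 \<Longrightarrow> continuous_on UNIV (K_trunc \<delta>)"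
  unfolding K_trunc_def by (intro continuous_intros) auto

lemma K_trunc_eq_K: "\<delta> \<le> norm w \<Longrightarrow> K_trunc \<delta> w = K w"
  unfolding K_trunc_def K_def using complex_div_cnj[of 1 w] by (simp add: max_def)

lemma norm_K_trunc_le:
  assumes "\<delta> > 0" shows "norm (K_trunc \<delta> w) \<le> 1 / \<delta>"
proof -
  let ?m = "max (norm w) \<delta>"
  have "norm (K_trunc \<delta> w) = norm w / ?m^2"
    unfolding K_trunc_def by (simp add: norm_divide norm_power)
  also have "\<dots> \<le> ?m / ?m^2"
    using assms by (intro divide_right_mono) auto
  also have "\<dots> = 1 / ?m"
    using assms by (simp add: power2_eq_square)
  also have "\<dots> \<le> 1 / \<delta>"
    using assms by (intro divide_left_mono) auto
  finally show ?thesis .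
qed

lemma norm_K_trunc_diff_le:
  "\<delta> > 0 \<Longrightarrow> norm (K_trunc \<delta> (z - x) - K_trunc \<delta> (z0 - x)) \<le> 2 / \<delta>"
  using norm_triangle_ineq4[of "K_trunc \<delta> (z - x)" "K_trunc \<delta> (z0 - x)"]
    norm_K_trunc_le[of \<delta> "z - x"] norm_K_trunc_le[of \<delta> "z0 - x"] by simp

lemma K_trunc_diff_decay:
  assumes "\<delta> > 0" and x: "2 * (norm z + norm z0) + 2 * \<delta> \<le> norm x"
  shows "norm (K_trunc \<delta> (z - x) - K_trunc \<delta> (z0 - x)) \<le> 4 * norm (z - z0) / (norm x)^2"
proof -
  have far: "norm x / 2 \<le> norm (w - x)" "\<delta> \<le> norm (w - x)" if "norm w \<le> norm z + norm z0" for w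
  proof -
    have "norm x - norm w \<le> norm (w - x)"
      using norm_triangle_ineq2[of x w] by (simp add: norm_minus_commute)
    note facts = this that x norm_ge_zero[of z] norm_ge_zero[of z0] \<open>\<delta> > 0\<close>
    show "norm x / 2 \<le> norm (w - x)" using facts by argo
    show "\<delta> \<le> norm (w - x)" using facts by argo
  qed
  have z: "norm x / 2 \<le> norm (z - x)" "\<delta> \<le> norm (z - x)"
    and z0: "norm x / 2 \<le> norm (z0 - x)" "\<delta> \<le> norm (z0 - x)"
    using far[of z] far[of z0] by simp_all
  then have nonzero: "z - x \<noteq> 0" "z0 - x \<noteq> 0"
    using \<open>\<delta> > 0\<close> by auto
  have "norm x > 0"
    using x \<open>\<delta> > 0\<close> norm_ge_zero[of z] norm_ge_zero[of z0] by argo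
  have "K_trunc \<delta> (z - x) - K_trunc \<delta> (z0 - x) = (z0 - z) / ((z - x) * (z0 - x))"
    using z(2) z0(2) nonzero by (simp add: K_trunc_eq_K K_def field_simps)
  then have "norm (K_trunc \<delta> (z - x) - K_trunc \<delta> (z0 - x))
      = norm (z - z0) / (norm (z - x) * norm (z0 - x))"
    by (simp add: norm_divide norm_mult norm_minus_commute)
  also have "\<dots> \<le> norm (z - z0) / ((norm x / 2) * (norm x / 2))"
    using z z0 \<open>norm x > 0\<close> by (intro divide_left_mono mult_mono mult_pos_pos) auto
  also have "\<dots> = 4 * norm (z - z0) / (norm x)^2"
    by (simp add: power2_eq_square)
  finally show ?thesis .
qed

lemma AE_K_trunc_diff_eq_K_diff:
  assumes \<mu>: "borel_measure_on_C \<mu>"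
    and null: "emeasure \<mu> (ball z \<delta>) = 0" "emeasure \<mu> (ball z0 \<delta>) = 0"
  shows "AE \<xi> in \<mu>. K_trunc \<delta> (z - \<xi>) - K_trunc \<delta> (z0 - \<xi>) = K (z - \<xi>) - K (z0 - \<xi>)"
proof (rule AE_I')
  show "ball z \<delta> \<union> ball z0 \<delta> \<in> null_sets \<mu>"
    using null \<mu> by (intro null_sets.Un) (auto simp: null_sets_def sets_borel_measure_on_C)
qed (auto simp: dist_norm; metis K_trunc_eq_K not_le)

lemma Ctilde1_eq_integral_K_trunc:
  assumes \<mu>: "borel_measure_on_C \<mu>"
    and null: "emeasure \<mu> (ball z \<delta>) = 0" "emeasure \<mu> (ball z0 \<delta>) = 0"
    and int: "integrable \<mu> (\<lambda>\<xi>. K_trunc \<delta> (z - \<xi>) - K_trunc \<delta> (z0 - \<xi>))"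
  shows "integrable \<mu> (\<lambda>\<xi>. K (z - \<xi>) - K (z0 - \<xi>))"
    and "Ctilde1 \<mu> z0 z = integral\<^sup>L \<mu> (\<lambda>\<xi>. K_trunc \<delta> (z - \<xi>) - K_trunc \<delta> (z0 - \<xi>))"
proof -
  have [measurable_cong]: "sets \<mu> = sets borel" by (rule sets_borel_measure_on_C[OF \<mu>])
  have meas: "(\<lambda>\<xi>. K (z - \<xi>) - K (z0 - \<xi>)) \<in> borel_measurable \<mu>"
    unfolding K_def by measurable
  note AE = AE_K_trunc_diff_eq_K_diff[OF \<mu> null]
  show "integrable \<mu> (\<lambda>\<xi>. K (z - \<xi>) - K (z0 - \<xi>))"
    by (rule integrable_cong_AE_imp[OF int meas AE])
  show "Ctilde1 \<mu> z0 z = integral\<^sup>L \<mu> (\<lambda>\<xi>. K_trunc \<delta> (z - \<xi>) - K_trunc \<delta> (z0 - \<xi>))"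
    unfolding Ctilde1_def
    by (rule integral_cong_AE[OF borel_measurable_integrable[OF int] meas AE, symmetric])
qed

lemma tendsto_Ctilde1_of_null_balls:
  assumes \<nu>s: "\<And>k. borel_measure_on_C (\<nu>s k)" and \<nu>: "borel_measure_on_C \<nu>"
    and nice: "\<And>k. nice C (\<nu>s k)" and "C \<ge> 0" and conv: "weak_conv \<nu>s \<nu>" and "\<delta> > 0"
    and null: "emeasure \<nu> (ball z \<delta>) = 0" "emeasure \<nu> (ball z0 \<delta>) = 0"
    and null_k: "\<forall>\<^sub>F k in sequentially.
      emeasure (\<nu>s k) (ball z \<delta>) = 0 \<and> emeasure (\<nu>s k) (ball z0 \<delta>) = 0"
  shows "integrable \<nu> (\<lambda>\<xi>. K (z - \<xi>) - K (z0 - \<xi>))"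
    and "\<forall>\<^sub>F k in sequentially. integrable (\<nu>s k) (\<lambda>\<xi>. K (z - \<xi>) - K (z0 - \<xi>))"
    and "(\<lambda>k. Ctilde1 (\<nu>s k) z0 z) \<longlonglongrightarrow> Ctilde1 \<nu> z0 z"
proof -
  let ?F = "\<lambda>\<xi>. K_trunc \<delta> (z - \<xi>) - K_trunc \<delta> (z0 - \<xi>)"
  have "continuous_on UNIV ?F"
    using \<open>\<delta> > 0\<close> by (intro continuous_intros continuous_on_compose2[OF continuous_on_K_trunc]) auto
  moreover have "0 < 2 * (norm z + norm z0) + 2 * \<delta>"
    using \<open>\<delta> > 0\<close> by (simp add: add_nonneg_pos)
  ultimately have int: "integrable \<nu> ?F" "\<And>k. integrable (\<nu>s k) ?F"
    and lim: "(\<lambda>k. integral\<^sup>L (\<nu>s k) ?F) \<longlonglongrightarrow> integral\<^sup>L \<nu> ?F"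
    using weak_conv_integral_tendsto_of_decay[OF \<nu>s \<nu> nice \<open>C \<ge> 0\<close> conv _
        norm_K_trunc_diff_le[OF \<open>\<delta> > 0\<close>] K_trunc_diff_decay[OF \<open>\<delta> > 0\<close>]]
    by simp_all
  note limit = Ctilde1_eq_integral_K_trunc[OF \<nu> null int(1)]
  have "\<forall>\<^sub>F k in sequentially. integrable (\<nu>s k) (\<lambda>\<xi>. K (z - \<xi>) - K (z0 - \<xi>))
      \<and> Ctilde1 (\<nu>s k) z0 z = integral\<^sup>L (\<nu>s k) ?F"
    using null_k by eventually_elim (use Ctilde1_eq_integral_K_trunc[OF \<nu>s _ _ int(2)] in blast)
  then show "\<forall>\<^sub>F k in sequentially. integrable (\<nu>s k) (\<lambda>\<xi>. K (z - \<xi>) - K (z0 - \<xi>))"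
    and "(\<lambda>k. Ctilde1 (\<nu>s k) z0 z) \<longlonglongrightarrow> Ctilde1 \<nu> z0 z"
    using tendsto_cong[of "\<lambda>k. Ctilde1 (\<nu>s k) z0 z" "\<lambda>k. integral\<^sup>L (\<nu>s k) ?F"] lim limit(2)
    by (simp_all add: eventually_conj_iff)
  show "integrable \<nu> (\<lambda>\<xi>. K (z - \<xi>) - K (z0 - \<xi>))" by (rule limit(1))
qed

theorem mainTheorem13:
  fixes \<nu>s :: "nat \<Rightarrow> complex measure" and \<nu> :: "complex measure"
    and C0 c0 :: real and z0 z :: complex
  assumes meas: "\<And>k. borel_measure_on_C (\<nu>s k)" and "borel_measure_on_C \<nu>"
    and c0: "c0 > 0"
    and reg: "\<And>k. AD_regular C0 c0 (\<nu>s k)"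
    and conv: "weak_conv \<nu>s \<nu>"
    and z0: "z0 \<notin> msupp \<nu>" and z: "z \<notin> msupp \<nu>"
  shows "(\<forall>\<^sub>F k in sequentially. z0 \<notin> msupp (\<nu>s k) \<and> z \<notin> msupp (\<nu>s k) \<and>
            integrable (\<nu>s k) (\<lambda>\<xi>. K (z - \<xi>) - K (z0 - \<xi>)))
         \<and> integrable \<nu> (\<lambda>\<xi>. K (z - \<xi>) - K (z0 - \<xi>))
         \<and> (\<lambda>k. Ctilde1 (\<nu>s k) z0 z) \<longlonglongrightarrow> Ctilde1 \<nu> z0 z"
proof -
  note \<nu> = assms(2)
  obtain \<rho> where "\<rho> > 0" and null: "emeasure \<nu> (ball z \<rho>) = 0" "emeasure \<nu> (ball z0 \<rho>) = 0"
    using eventually_happens'[OF _ eventually_conj[OF eventually_at_right_less eventually_conj[OF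
          eventually_at_right_emeasure_ball_eq_0[OF \<nu> z] eventually_at_right_emeasure_ball_eq_0[OF \<nu> z0]]]]
    by auto
  have null_half: "emeasure \<nu> (ball z (\<rho>/2)) = 0" "emeasure \<nu> (ball z0 (\<rho>/2)) = 0"
    using \<open>\<rho> > 0\<close> emeasure_ball_eq_0_mono[OF \<nu> null(1)] emeasure_ball_eq_0_mono[OF \<nu> null(2)] by simp_all
  have null_k: "\<forall>\<^sub>F k in sequentially.
      emeasure (\<nu>s k) (ball z (\<rho>/2)) = 0 \<and> emeasure (\<nu>s k) (ball z0 (\<rho>/2)) = 0"
    using eventually_emeasure_ball_eq_0[OF meas \<nu> c0 reg conv \<open>\<rho> > 0\<close>] null by (intro eventually_conj)
  have nice: "nice (max C0 0) (\<nu>s k)" for k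
    using reg[of k] by (auto simp: AD_regular_def intro: nice_mono[of C0])
  note limit = tendsto_Ctilde1_of_null_balls[OF meas \<nu> nice _ conv _ null_half null_k]
  have "\<forall>\<^sub>F k in sequentially. z0 \<notin> msupp (\<nu>s k) \<and> z \<notin> msupp (\<nu>s k)"
    using null_k by eventually_elim (use \<open>\<rho> > 0\<close> in \<open>auto simp: msupp_def intro!: exI[of _ "\<rho>/2"]\<close>)
  with limit \<open>\<rho> > 0\<close> show ?thesis
    by (simp add: eventually_conj_iff)
qed

end
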